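(* Let $\alpha>0$, $\beta>0$, $D>0$, $T\ge1$, $X=[-D/2,D/2]\subseteq\mathbb R$ and $x_0=0$. For $\theta=(\theta_1,\dots,\theta_T)'\in X^T$ let $f_t(x)=\frac\alpha2(x-\theta_t)^2$ and $$C_1^T(x)=\sum_{t=1}^T\Big(f_t(x_t)+\frac\beta2(x_t-x_{t-1})^2\Big).$$ Then for any $\theta\in X^T$ there exists a matrix $A=(a_{t,s})\in\mathbb R^{T\times T}$ such that $x^*=A\theta$, where $x^*=\arg\min_{x\in X^T}C_1^T(x)$. Moreover, the entries of $A$ satisfy $$a_{t,t+\tau}\ge\frac{\alpha}{\alpha+\beta}(1-\rho)\rho^{\tau}$$ for all $t$ and all $\tau\ge0$ with $t+\tau\le T$, where $Q_f=\frac{\alpha+4\beta}{\alpha}$ and $\rho=\frac{\sqrt{Q_f}-1}{\sqrt{Q_f}+1}$. *)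

theory Defs
  imports Complex_Main
begin

text \<open>Vectors in R^T are represented as functions nat \<Rightarrow> real, indexed by 1..T;
  the initial point x_0 = 0 is fixed inside the cost.\<close>

definition cost :: "real \<Rightarrow> real \<Rightarrow> nat \<Rightarrow> (nat \<Rightarrow> real) \<Rightarrow> (nat \<Rightarrow> real) \<Rightarrow> real" where
  "cost \<alpha> \<beta> T \<theta> x =
     (\<Sum>t=1..T. \<alpha>/2 * (x t - \<theta> t)^2
                + \<beta>/2 * (x t - (if t = 1 then 0 else x (t - 1)))^2)"

definition in_box :: "real \<Rightarrow> nat \<Rightarrow> (nat \<Rightarrow> real) \<Rightarrow> bool" where
  "in_box D T x \<longleftrightarrow> (\<forall>t\<in>{1..T}. x t \<in> {-D/2..D/2})"

definition is_argmin :: "real \<Rightarrow> real \<Rightarrow> real \<Rightarrow> nat \<Rightarrow> (nat \<Rightarrow> real) \<Rightarrow> (nat \<Rightarrow> real) \<Rightarrow> bool" where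
  "is_argmin \<alpha> \<beta> D T \<theta> x \<longleftrightarrow>
     in_box D T x \<and> (\<forall>y. in_box D T y \<longrightarrow> cost \<alpha> \<beta> T \<theta> x \<le> cost \<alpha> \<beta> T \<theta> y)"

definition matvec :: "nat \<Rightarrow> (nat \<Rightarrow> nat \<Rightarrow> real) \<Rightarrow> (nat \<Rightarrow> real) \<Rightarrow> nat \<Rightarrow> real" where
  "matvec T A \<theta> = (\<lambda>t. \<Sum>s=1..T. A t s * \<theta> s)"

end

theory Submission
  imports Defs
begin

(* The cost is a convex quadratic with gradient H x - \<alpha> \<theta>, where H is the tridiagonal matrix
   with off-diagonal entries -\<beta> and diagonal \<alpha> + 2\<beta> (\<alpha> + \<beta> in the last row). Hence the solution
   of H x = \<alpha> \<theta>, i.e. x = A \<theta> with A = \<alpha> H^-1, is the unique unconstrained minimiser; since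
   clipping to the box does not increase the cost when \<theta> lies in the box, it is also the minimiser
   over the box. H satisfies a discrete minimum principle (H z \<ge> 0 implies z \<ge> 0), so each
   column of A dominates every subsolution of its defining equation. For column s the
   subsolution (\<alpha> \<rho> / \<beta>) (\<rho>^(s-t) - \<rho>^(s+t)), t \<le> s, built from the root \<rho> in (0,1) of
   \<beta> r^2 - (\<alpha> + 2\<beta>) r + \<beta> = 0, yields the bound. *)

definition lag :: "(nat \<Rightarrow> real) \<Rightarrow> nat \<Rightarrow> real" where
  "lag x t = (if t \<le> 1 then 0 else x (t - 1))"

definition hess :: "real \<Rightarrow> real \<Rightarrow> nat \<Rightarrow> (nat \<Rightarrow> real) \<Rightarrow> nat \<Rightarrow> real" where
  "hess a b T x t = a * x t + b * (x t - lag x t) + (if t < T then b * (x t - x (t + 1)) else 0)"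

lemma cost_lag:
  "cost a b T \<theta> x = (\<Sum>t=1..T. a/2 * (x t - \<theta> t)^2 + b/2 * (x t - lag x t)^2)"
  unfolding cost_def lag_def by (rule sum.cong) auto

lemma sum_lag_by_parts:
  "(\<Sum>t=1..T. g t * lag d t) = (\<Sum>t=1..T. d t * (if t < T then g (t + 1) else 0))"
proof -
  have "(\<Sum>t=1..T. g t * lag d t) = (\<Sum>t=1..<T. d t * g (t + 1))"
    by (induction T) (auto simp: lag_def)
  moreover have "{t \<in> {1..T}. t < T} = {1..<T}"
    by auto
  moreover have "d t * (if t < T then g (t + 1) else 0) = (if t < T then d t * g (t + 1) else 0)" for t
    by simp
  ultimately show ?thesis
    by (simp add: sum.inter_filter[symmetric])
qed

lemma cost_add:
  "cost a b T \<theta> (\<lambda>t. x t + d t) =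
     cost a b T \<theta> x + (\<Sum>t=1..T. d t * (hess a b T x t - a * \<theta> t)) + cost a b T (\<lambda>_. 0) d"
proof -
  define g where "g t = b * (x t - lag x t)" for t
  have lag_add: "lag (\<lambda>t. x t + d t) t = lag x t + lag d t" for t
    by (simp add: lag_def)
  have "cost a b T \<theta> (\<lambda>t. x t + d t) =
      (\<Sum>t=1..T. (a/2 * (x t - \<theta> t)^2 + b/2 * (x t - lag x t)^2)
        + (a/2 * (d t - 0)^2 + b/2 * (d t - lag d t)^2)
        + (a * (x t - \<theta> t) * d t + g t * d t) - g t * lag d t)"
    unfolding cost_lag lag_add g_def by (rule sum.cong) (simp_all add: power2_eq_square algebra_simps)
  also have "\<dots> = cost a b T \<theta> x + cost a b T (\<lambda>_. 0) d
          + (\<Sum>t=1..T. a * (x t - \<theta> t) * d t + g t * d t) - (\<Sum>t=1..T. g t * lag d t)"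
    unfolding cost_lag by (simp only: sum.distrib sum_subtractf)
  finally have expanded: "cost a b T \<theta> (\<lambda>t. x t + d t) = cost a b T \<theta> x + cost a b T (\<lambda>_. 0) d
      + (\<Sum>t=1..T. a * (x t - \<theta> t) * d t + g t * d t) - (\<Sum>t=1..T. g t * lag d t)" .
  have "(\<Sum>t=1..T. a * (x t - \<theta> t) * d t + g t * d t) - (\<Sum>t=1..T. g t * lag d t)
      = (\<Sum>t=1..T. d t * (hess a b T x t - a * \<theta> t))"
    unfolding sum_lag_by_parts sum_subtractf[symmetric]
    by (rule sum.cong) (auto simp: hess_def g_def lag_def algebra_simps)
  with expanded show ?thesis
    by simp
qed

lemma cost_nonneg: "a \<ge> 0 \<Longrightarrow> b \<ge> 0 \<Longrightarrow> 0 \<le> cost a b T \<theta> x"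
  unfolding cost_def by (intro sum_nonneg add_nonneg_nonneg mult_nonneg_nonneg) auto

lemma cost_zero_target_le_0_imp_eq_0:
  assumes "a > 0" "b \<ge> 0" "cost a b T (\<lambda>_. 0) d \<le> 0" "t \<in> {1..T}"
  shows "d t = 0"
proof -
  have "a/2 * (d t)^2 \<le> a/2 * (d t - 0)^2 + b/2 * (d t - lag d t)^2"
    using assms(2) by simp
  also have "\<dots> \<le> cost a b T (\<lambda>_. 0) d"
    unfolding cost_lag using assms by (intro member_le_sum) auto
  finally have "a/2 * (d t)^2 \<le> 0"
    using assms(3) by linarith
  then show ?thesis
    using assms(1) by (simp add: mult_le_0_iff)
qed

definition clip :: "real \<Rightarrow> real \<Rightarrow> real" where
  "clip D v = max (-D/2) (min (D/2) v)"

lemma clip_in_box: "D \<ge> 0 \<Longrightarrow> clip D v \<in> {-D/2..D/2}"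
  unfolding clip_def by auto

lemma cost_clip_le:
  assumes "a \<ge> 0" "b \<ge> 0" "D \<ge> 0" "in_box D T \<theta>"
  shows "cost a b T \<theta> (\<lambda>t. clip D (x t)) \<le> cost a b T \<theta> x"
  unfolding cost_lag
proof (rule sum_mono)
  fix t assume t: "t \<in> {1..T}"
  have clip_contracts: "(clip D u - clip D v)^2 \<le> (u - v)^2" for u v
    using assms(3) by (intro abs_le_square_iff[THEN iffD1]) (auto simp: clip_def)
  have "clip D (\<theta> t) = \<theta> t"
    using assms(4) t unfolding in_box_def clip_def by auto
  moreover have "lag (\<lambda>t. clip D (x t)) t = clip D (lag x t)"
    using assms(3) by (simp add: lag_def clip_def)
  ultimately show "a/2 * (clip D (x t) - \<theta> t)^2 + b/2 * (clip D (x t) - lag (\<lambda>t. clip D (x t)) t)^2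
        \<le> a/2 * (x t - \<theta> t)^2 + b/2 * (x t - lag x t)^2"
    using assms(1,2) clip_contracts[of "x t" "\<theta> t"] clip_contracts[of "x t" "lag x t"]
    by (intro add_mono mult_left_mono) auto
qed

lemma stationary_imp_unique_argmin:
  assumes "a > 0" "b \<ge> 0" "D \<ge> 0" "in_box D T \<theta>"
    and stationary: "\<forall>t\<in>{1..T}. hess a b T x t = a * \<theta> t"
  shows "is_argmin a b D T \<theta> x" "is_argmin a b D T \<theta> y \<Longrightarrow> t \<in> {1..T} \<Longrightarrow> y t = x t"
proof -
  have cost_eq: "cost a b T \<theta> y = cost a b T \<theta> x + cost a b T (\<lambda>_. 0) (\<lambda>t. y t - x t)" for y
    using cost_add[of a b T \<theta> x "\<lambda>t. y t - x t"] stationary by simp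
  have agree: "y t = x t" if "cost a b T \<theta> y \<le> cost a b T \<theta> x" "t \<in> {1..T}" for y t
    using cost_zero_target_le_0_imp_eq_0[of a b T "\<lambda>t. y t - x t" t] assms(1,2) that cost_eq[of y]
    by simp
  have "in_box D T x"
    using agree[OF cost_clip_le] clip_in_box assms(1-4) unfolding in_box_def by (metis less_imp_le)
  moreover have "cost a b T \<theta> x \<le> cost a b T \<theta> y" for y
    using cost_eq[of y] cost_nonneg[of a b] assms(1,2) by simp
  ultimately show "is_argmin a b D T \<theta> x"
    unfolding is_argmin_def by blast
  show "y t = x t" if "is_argmin a b D T \<theta> y" "t \<in> {1..T}"
    using agree that \<open>in_box D T x\<close> unfolding is_argmin_def by blast
qed

lemma lag_eq: "x 0 = 0 \<Longrightarrow> lag x t = x (t - 1)"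
  by (simp add: lag_def le_Suc_eq)

lemma hess_diff: "hess a b T (\<lambda>u. z u - w u) t = hess a b T z t - hess a b T w t"
  by (simp add: hess_def lag_def algebra_simps)

lemma hess_sum:
  "hess a b T (\<lambda>u. \<Sum>s\<in>S. c s * z s u) t = (\<Sum>s\<in>S. c s * hess a b T (z s) t)"
  by (simp add: hess_def lag_def sum_distrib_left sum.distrib sum_subtractf algebra_simps)

lemma hess_matvec:
  assumes columns: "\<forall>s\<in>{1..T}. \<forall>u\<in>{1..T}. hess a b T (\<lambda>v. A v s) u = a * (if u = s then 1 else 0)"
    and "t \<in> {1..T}"
  shows "hess a b T (matvec T A \<theta>) t = a * \<theta> t"
proof -
  have "hess a b T (matvec T A \<theta>) t = (\<Sum>s\<in>{1..T}. \<theta> s * hess a b T (\<lambda>v. A v s) t)"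
    using hess_sum[of a b T \<theta> "\<lambda>s v. A v s" "{1..T}" t] by (simp add: matvec_def mult.commute)
  also have "\<dots> = (\<Sum>s\<in>{1..T}. if t = s then a * \<theta> s else 0)"
    using columns assms(2) by (intro sum.cong) auto
  also have "\<dots> = a * \<theta> t"
    using assms(2) by simp
  finally show ?thesis .
qed

lemma hess_nonneg_imp_nonneg:
  assumes "a > 0" "b \<ge> 0" and nonneg: "\<forall>t\<in>{1..T}. hess a b T z t \<ge> 0" and "t \<in> {1..T}"
  shows "z t \<ge> 0"
proof (rule ccontr)
  assume "\<not> z t \<ge> 0"
  obtain t0 where "is_arg_min z (\<lambda>u. u \<in> {1..T}) t0"
    using ex_is_arg_min_if_finite[of "{1..T}" z] \<open>t \<in> {1..T}\<close> by blast
  then have t0: "t0 \<in> {1..T}" and min: "\<And>u. u \<in> {1..T} \<Longrightarrow> z t0 \<le> z u"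
    by (simp_all add: is_arg_min_linorder)
  have neg: "z t0 < 0"
    using min[OF \<open>t \<in> {1..T}\<close>] \<open>\<not> z t \<ge> 0\<close> by linarith
  have "z t0 \<le> lag z t0"
  proof (cases "t0 \<le> 1")
    case False
    with t0 have "t0 - 1 \<in> {1..T}"
      by auto
    with False min show ?thesis
      by (simp add: lag_def)
  qed (use neg in \<open>simp add: lag_def\<close>)
  moreover have "t0 < T \<Longrightarrow> z t0 \<le> z (t0 + 1)"
    using min t0 by simp
  ultimately have "hess a b T z t0 \<le> a * z t0"
    unfolding hess_def using assms(2)
    by (auto simp: mult_le_0_iff intro!: add_nonpos_nonpos)
  moreover have "a * z t0 < 0"
    using assms(1) neg by (simp add: mult_pos_neg)
  ultimately show False
    using nonneg t0 by fastforce
qed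

(* Solves the rows 1..T-1 of H z = c forwards from z 1 = l; the last row then determines l. *)
fun shoot :: "real \<Rightarrow> real \<Rightarrow> (nat \<Rightarrow> real) \<Rightarrow> real \<Rightarrow> nat \<Rightarrow> real" where
  "shoot a b c l 0 = 0"
| "shoot a b c l (Suc 0) = l"
| "shoot a b c l (Suc (Suc n)) = ((a + 2*b) * shoot a b c l (Suc n) - b * shoot a b c l n - c (Suc n)) / b"

lemma shoot_linear: "b \<noteq> 0 \<Longrightarrow> shoot a b c l n = l * shoot a b (\<lambda>_. 0) 1 n + shoot a b c 0 n"
  by (induction a b c l n rule: shoot.induct) (auto simp: field_simps)

lemma hess_shoot:
  assumes "b \<noteq> 0" "1 \<le> t" "t < T"
  shows "hess a b T (shoot a b c l) t = c t"
proof -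
  obtain n where "t = Suc n"
    using assms(2) by (cases t) auto
  then show ?thesis
    using assms by (cases n) (auto simp: hess_def lag_def field_simps)
qed

lemma shoot_homogeneous_mono:
  assumes "a \<ge> 0" "b > 0"
  shows "shoot a b (\<lambda>_. 0) 1 n \<le> shoot a b (\<lambda>_. 0) 1 (Suc n) \<and> 1 \<le> shoot a b (\<lambda>_. 0) 1 (Suc n)"
proof (induction n)
  case (Suc n)
  let ?P = "shoot a b (\<lambda>_. 0) 1"
  have "?P (Suc (Suc n)) - ?P (Suc n) = (a * ?P (Suc n) + b * (?P (Suc n) - ?P n)) / b"
    using assms by (simp add: field_simps)
  also have "\<dots> \<ge> 0"
    using Suc assms by (intro divide_nonneg_pos add_nonneg_nonneg mult_nonneg_nonneg) auto
  finally show ?case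
    using Suc by simp
qed simp

lemma hess_solvable:
  assumes "a > 0" "b > 0"
  shows "\<exists>z. \<forall>t\<in>{1..T}. hess a b T z t = c t"
proof (cases "T = 0")
  case False
  let ?P = "shoot a b (\<lambda>_. 0) 1" and ?R = "shoot a b c 0"
  have "hess a b T ?P T \<ge> a * ?P T"
    using shoot_homogeneous_mono[of a b "T - 1"] assms False by (simp add: hess_def lag_eq)
  moreover have "a * ?P T > 0"
    using shoot_homogeneous_mono[of a b "T - 1"] assms False by simp
  ultimately have "hess a b T ?P T > 0"
    by linarith
  define l where "l = (c T - hess a b T ?R T) / hess a b T ?P T"
  with \<open>hess a b T ?P T > 0\<close> have l: "l * hess a b T ?P T + hess a b T ?R T = c T"
    by simp
  have z_eq: "shoot a b c l = (\<lambda>u. l * ?P u + ?R u)"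
    using shoot_linear[of b a c l] assms(2) by auto
  have "hess a b T (shoot a b c l) t = c t" if "t \<in> {1..T}" for t
  proof (cases "t < T")
    case True
    then show ?thesis
      using that hess_shoot[of b t T a c l] assms(2) by simp
  next
    case False
    with that have "t = T"
      by simp
    with l show ?thesis
      unfolding z_eq by (simp add: hess_def lag_def algebra_simps)
  qed
  then show ?thesis
    by blast
qed simp

definition rho :: "real \<Rightarrow> real \<Rightarrow> real" where
  "rho a b = (sqrt ((a + 4*b)/a) - 1) / (sqrt ((a + 4*b)/a) + 1)"

lemma rho_char_root:
  assumes "a > 0" "b > 0"
  shows "0 < rho a b" "rho a b < 1" "b * (rho a b)^2 - (a + 2*b) * rho a b + b = 0"
proof -
  define q where "q = sqrt ((a + 4*b)/a)"
  have "(a + 4*b)/a > 1"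
    using assms by (simp add: field_simps)
  then have q: "q > 1" "a * q^2 = a + 4*b"
    using assms(1) by (simp_all add: q_def real_less_rsqrt)
  have r: "rho a b = (q - 1) / (q + 1)"
    by (simp add: rho_def q_def)
  show "0 < rho a b" "rho a b < 1"
    unfolding r using q(1) by simp_all
  have scaled: "rho a b * (q + 1) = q - 1"
    unfolding r using q(1) by simp
  have "(q + 1)^2 * (b * (rho a b)^2 - (a + 2*b) * rho a b + b)
      = b * (rho a b * (q + 1))^2 - (a + 2*b) * (rho a b * (q + 1)) * (q + 1) + b * (q + 1)^2"
    by (simp add: power2_eq_square algebra_simps)
  also have "\<dots> = a + 4*b - a * q^2"
    unfolding scaled by (simp add: power2_eq_square algebra_simps)
  finally show "b * (rho a b)^2 - (a + 2*b) * rho a b + b = 0"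
    using q by simp
qed

locale decay_root =
  fixes a b r :: real
  assumes a_pos: "a > 0" and b_pos: "b > 0" and r_pos: "0 < r" and r_lt_1: "r < 1"
    and char_eq: "b * r^2 - (a + 2*b) * r + b = 0"
begin

lemma power_recurrence: "(a + 2*b) * r^(Suc k) - b * r^(Suc (Suc k)) - b * r^k = 0"
proof -
  have "(a + 2*b) * r^(Suc k) - b * r^(Suc (Suc k)) - b * r^k = -(r^k * (b * r^2 - (a + 2*b) * r + b))"
    by (simp add: power2_eq_square algebra_simps)
  then show ?thesis
    using char_eq by simp
qed

(* Both r^(s-t) and r^(s+t) solve the homogeneous recurrence of H, their difference vanishes
   at t = 0, and the factor a r / b makes the defect in row s at most a. *)
definition barrier :: "nat \<Rightarrow> nat \<Rightarrow> real" where
  "barrier s t = (if t \<le> s then a * r / b * (r^(s-t) - r^(s+t)) else 0)"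

lemma barrier_nonneg: "barrier s t \<ge> 0"
proof -
  have "r^(s+t) \<le> r^(s-t)"
    using r_pos r_lt_1 by (intro power_decreasing) auto
  then show ?thesis
    using a_pos b_pos r_pos by (simp add: barrier_def)
qed

lemma hess_barrier_le:
  assumes s: "s \<in> {1..T}" and t: "t \<in> {1..T}"
  shows "hess a b T (barrier s) t \<le> a * (if t = s then 1 else 0)"
proof -
  define K where "K = a * r / b"
  have lag_barrier: "lag (barrier s) u = barrier s (u - 1)" for u
    by (simp add: lag_eq barrier_def)
  consider "t < s" | "t = s" | "t > s"
    by linarith
  then show ?thesis
  proof cases
    case 1
    obtain k where k: "s - t = Suc k"
      using 1 by (metis Suc_diff_Suc)
    obtain m where m: "s + t = Suc m"
      using t by (cases "s + t") auto
    have "s - (t - 1) = Suc (Suc k)" "s + (t - 1) = m" "s - (t + 1) = k" "s + (t + 1) = Suc (Suc m)"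
      using k m t 1 by auto
    then have "hess a b T (barrier s) t
        = K * ((a + 2*b) * r^(Suc k) - b * r^(Suc (Suc k)) - b * r^k)
          - K * ((a + 2*b) * r^(Suc m) - b * r^(Suc (Suc m)) - b * r^m)"
      using 1 k m s by (simp add: hess_def lag_barrier barrier_def K_def[symmetric] algebra_simps)
    then show ?thesis
      using 1 power_recurrence[of k] power_recurrence[of m] by simp
  next
    case 2
    obtain j where j: "s = Suc j"
      using s by (cases s) auto
    define p where "p = r^(2*j)"
    have at_s: "barrier s s = K * (1 - r * (r * p))" and before_s: "barrier s (s - 1) = K * (r - r * p)"
      by (simp_all add: barrier_def K_def p_def j mult_2 power_add)
    have "(a + 2*b) * barrier s s - b * barrier s (s - 1)
        = K * ((a + 2*b) - b * r) - K * r * p * ((a + 2*b) * r - b)"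
      unfolding at_s before_s by (simp add: algebra_simps)
    moreover have "(a + 2*b) * r - b = b * r^2"
      using char_eq by linarith
    moreover have "K * ((a + 2*b) - b * r) = a"
    proof -
      have "K * ((a + 2*b) - b * r) = a * ((a + 2*b) * r - b * r^2) / b"
        by (simp add: K_def power2_eq_square field_simps)
      also have "(a + 2*b) * r - b * r^2 = b"
        using char_eq by linarith
      finally show ?thesis
        using b_pos by simp
    qed
    ultimately have "(a + 2*b) * barrier s s - b * barrier s (s - 1) = a - K * r * p * (b * r^2)"
      by simp
    moreover have "hess a b T (barrier s) t \<le> (a + 2*b) * barrier s s - b * barrier s (s - 1)"
      using 2 mult_nonneg_nonneg[OF less_imp_le[OF b_pos] barrier_nonneg[of s s]]
      by (simp add: hess_def lag_barrier barrier_def[of s "Suc s"] algebra_simps)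
    moreover have "K * r * p * (b * r^2) \<ge> 0"
      using a_pos b_pos r_pos by (simp add: K_def p_def)
    ultimately show ?thesis
      using 2 by simp
  next
    case 3
    then have "hess a b T (barrier s) t = - b * barrier s (t - 1)"
      by (simp add: hess_def lag_barrier barrier_def)
    then show ?thesis
      using 3 barrier_nonneg[of s "t - 1"] b_pos by (simp add: mult_le_0_iff)
  qed
qed

lemma barrier_ge:
  assumes "1 \<le> t" "t \<le> s"
  shows "barrier s t \<ge> a / (a + b) * (1 - r) * r^(s-t)"
proof -
  define K where "K = a * r / b"
  have "r^(s+t) = r^(s-t) * r^(2*t)"
    using assms(2) by (simp add: power_add[symmetric] add.commute)
  also have "\<dots> \<le> r^(s-t) * r^2"
    using assms(1) r_pos r_lt_1 by (intro mult_left_mono power_decreasing) auto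
  finally have "K * r^(s+t) \<le> K * (r^(s-t) * r^2)"
    using a_pos b_pos r_pos by (intro mult_left_mono) (simp_all add: K_def)
  then have "barrier s t \<ge> K * (1 - r^2) * r^(s-t)"
    using assms(2) by (simp add: barrier_def K_def[symmetric] algebra_simps)
  moreover have "K * (1 - r^2) \<ge> a / (a + b) * (1 - r)"
  proof -
    have "r * (1 + r) * (a + b) - b - b * r^3 = -((1 + r) * (b * r^2 - (a + 2*b) * r + b))"
      by (simp add: power2_eq_square power3_eq_cube algebra_simps)
    then have "r * (1 + r) * (a + b) - b = b * r^3"
      using char_eq by simp
    then have "r * (1 + r) / b \<ge> 1 / (a + b)"
      using a_pos b_pos r_pos by (simp add: field_simps)
    then have "a * (1 - r) * (r * (1 + r) / b) \<ge> a * (1 - r) * (1 / (a + b))"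
      using a_pos r_lt_1 by (intro mult_left_mono) auto
    then show ?thesis
      by (simp add: K_def power2_eq_square algebra_simps)
  qed
  then have "a / (a + b) * (1 - r) * r^(s-t) \<le> K * (1 - r^2) * r^(s-t)"
    using r_pos by (intro mult_right_mono) simp_all
  ultimately show ?thesis
    by linarith
qed

lemma green_column_ge:
  assumes s: "s \<in> {1..T}" and column: "\<forall>u\<in>{1..T}. hess a b T z u = a * (if u = s then 1 else 0)"
    and "1 \<le> t" "t \<le> s"
  shows "z t \<ge> a / (a + b) * (1 - r) * r^(s-t)"
proof -
  have "\<forall>u\<in>{1..T}. hess a b T (\<lambda>u. z u - barrier s u) u \<ge> 0"
    using column hess_barrier_le[OF s] by (simp add: hess_diff)
  then have "z t - barrier s t \<ge> 0"
    using hess_nonneg_imp_nonneg[OF a_pos less_imp_le[OF b_pos]] s assms(3,4) by fastforce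
  with barrier_ge[OF assms(3,4)] show ?thesis
    by simp
qed

end

theorem lemma5:
  fixes \<alpha> \<beta> D :: real and T :: nat and \<theta> :: "nat \<Rightarrow> real"
  assumes "\<alpha> > 0" "\<beta> > 0" "D > 0" "T \<ge> 1"
    and "in_box D T \<theta>"
  shows "\<exists>A :: nat \<Rightarrow> nat \<Rightarrow> real.
           is_argmin \<alpha> \<beta> D T \<theta> (matvec T A \<theta>)
         \<and> (\<forall>x. is_argmin \<alpha> \<beta> D T \<theta> x \<longrightarrow> (\<forall>t\<in>{1..T}. x t = matvec T A \<theta> t))
         \<and> (\<forall>t \<tau>. 1 \<le> t \<and> t + \<tau> \<le> T \<longrightarrow>
              A t (t + \<tau>) \<ge>
                \<alpha> / (\<alpha> + \<beta>) * (1 - (sqrt ((\<alpha> + 4*\<beta>)/\<alpha>) - 1) / (sqrt ((\<alpha> + 4*\<beta>)/\<alpha>) + 1))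
                * ((sqrt ((\<alpha> + 4*\<beta>)/\<alpha>) - 1) / (sqrt ((\<alpha> + 4*\<beta>)/\<alpha>) + 1)) ^ \<tau>)"
proof -
  interpret decay_root \<alpha> \<beta> "rho \<alpha> \<beta>"
    using rho_char_root assms(1,2) by unfold_locales auto
  have "\<forall>s. \<exists>z. \<forall>t\<in>{1..T}. hess \<alpha> \<beta> T z t = \<alpha> * (if t = s then 1 else 0)"
    using hess_solvable[OF assms(1,2)] by (intro allI)
  from choice[OF this] obtain col
    where col: "\<forall>s. \<forall>t\<in>{1..T}. hess \<alpha> \<beta> T (col s) t = \<alpha> * (if t = s then 1 else 0)" ..
  define A where "A t s = col s t" for t s
  have "\<forall>t\<in>{1..T}. hess \<alpha> \<beta> T (matvec T A \<theta>) t = \<alpha> * \<theta> t"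
    using col by (intro ballI hess_matvec) (simp_all add: A_def)
  then have "is_argmin \<alpha> \<beta> D T \<theta> (matvec T A \<theta>)"
    and "is_argmin \<alpha> \<beta> D T \<theta> x \<Longrightarrow> t \<in> {1..T} \<Longrightarrow> x t = matvec T A \<theta> t" for x t
    using stationary_imp_unique_argmin[of \<alpha> \<beta> D T \<theta>] assms by simp_all
  moreover have "A t (t + \<tau>) \<ge> \<alpha> / (\<alpha> + \<beta>) * (1 - rho \<alpha> \<beta>) * rho \<alpha> \<beta> ^ \<tau>"
    if "1 \<le> t" "t + \<tau> \<le> T" for t \<tau>
    using green_column_ge[of "t + \<tau>" T "col (t + \<tau>)" t] col that by (simp add: A_def)
  ultimately show ?thesis
    unfolding rho_def[symmetric] by blast
qed

end
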